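(* Let $G$ be a weighted graph as in the context. For every integer $m\geq1$, \[(q^G_m(x)-q^G_m(y))^2\leq \frac{12R_G(x,y)h_G^{-1}(\lceil m/2\rceil)}{m^2},\qquad\forall x,y\in V(G).\]
   Context: $G$ is a locally finite connected graph with at least two vertices, vertex set $V(G)$ and distinguished vertex $\rho=\rho(G)$; $\mu^G$ is a symmetric weight with $\mu^G_{xy}>0$ iff $\{x,y\}$ is an edge, $\mu^G_x:=\sum_y\mu^G_{xy}$, $\nu^G(A):=\sum_{x\in A}\mu^G_x$. The discrete time simple random walk $X^G$ has transition probabilities $P_G(x,y)=\mu^G_{xy}/\mu^G_x$ and law $\mathbf{P}^G_x$; $p^G_m(x,y):=\mathbf{P}^G_x(X^G_m=y)/\nu^G(\{y\})$, $q^G_m(x,y):=\frac12(p^G_m(x,y)+p^G_{m+1}(x,y))$, $q^G_m(x):=q^G_m(\rho,x)$. The generator is $\mathcal{L}_Gf(x)=\sum_yP_G(x,y)(f(y)-f(x))$, $(f,g)_G:=\sum_xf(x)g(x)\nu^G(\{x\})$, $\mathcal{E}_G(f,g):=-(\mathcal{L}_Gf,g)_G$, $\mathcal{F}_G:=\{f:\mathcal{E}_G(f,f)<\infty\}$. The resistance metric is \[R_G(x,y):=\sup\left\{\frac{|f(x)-f(y)|^2}{\mathcal{E}_G(f,f)}:f\in\mathcal{F}_G,\ \mathcal{E}_G(f,f)>0\right\}.\] Set $V_G(r):=\nu^G(\{x:R_G(\rho,x)\le r\})$, $h_G(r):=rV_G(r)$, and $h_G^{-1}(m):=\sup\{r:h_G(r)\le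 m\}$. *)

theory Defs
  imports "HOL-Analysis.Analysis"
begin

text \<open>The vertex set V(G) is the whole type 'a; mu is the symmetric edge weight,
  mu x y > 0 iff {x,y} is an edge.\<close>

definition weighted_graph :: "('a \<Rightarrow> 'a \<Rightarrow> real) \<Rightarrow> bool" where
  "weighted_graph mu \<longleftrightarrow>
     (\<forall>x y. 0 \<le> mu x y) \<and> (\<forall>x y. mu x y = mu y x) \<and>
     (\<forall>x. finite {y. 0 < mu x y}) \<and>
     (\<forall>x y. (x, y) \<in> {(a, b). 0 < mu a b}\<^sup>*) \<and>
     (\<exists>x y::'a. x \<noteq> y)"

definition mu_v :: "('a \<Rightarrow> 'a \<Rightarrow> real) \<Rightarrow> 'a \<Rightarrow> real" where
  "mu_v mu x = (\<Sum>y\<in>{y. 0 < mu x y}. mu x y)"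

definition nu :: "('a \<Rightarrow> 'a \<Rightarrow> real) \<Rightarrow> 'a set \<Rightarrow> ennreal" where
  "nu mu A = infsum (\<lambda>x. ennreal (mu_v mu x)) A"

definition trans_prob :: "('a \<Rightarrow> 'a \<Rightarrow> real) \<Rightarrow> 'a \<Rightarrow> 'a \<Rightarrow> real" where
  "trans_prob mu x y = mu x y / mu_v mu x"

fun walk_prob :: "('a \<Rightarrow> 'a \<Rightarrow> real) \<Rightarrow> nat \<Rightarrow> 'a \<Rightarrow> 'a \<Rightarrow> real" where
  "walk_prob mu 0 x y = (if x = y then 1 else 0)"
| "walk_prob mu (Suc m) x y =
     (\<Sum>z\<in>{z. 0 < mu x z}. trans_prob mu x z * walk_prob mu m z y)"

definition heat_kernel :: "('a \<Rightarrow> 'a \<Rightarrow> real) \<Rightarrow> nat \<Rightarrow> 'a \<Rightarrow> 'a \<Rightarrow> real" where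
  "heat_kernel mu m x y = walk_prob mu m x y / mu_v mu y"

definition qker :: "('a \<Rightarrow> 'a \<Rightarrow> real) \<Rightarrow> 'a \<Rightarrow> nat \<Rightarrow> 'a \<Rightarrow> real" where
  "qker mu \<rho> m x = (heat_kernel mu m \<rho> x + heat_kernel mu (Suc m) \<rho> x) / 2"

definition energy :: "('a \<Rightarrow> 'a \<Rightarrow> real) \<Rightarrow> ('a \<Rightarrow> real) \<Rightarrow> ennreal" where
  "energy mu f = infsum (\<lambda>(x, y). ennreal (mu x y * (f x - f y)^2 / 2)) UNIV"

definition resistance :: "('a \<Rightarrow> 'a \<Rightarrow> real) \<Rightarrow> 'a \<Rightarrow> 'a \<Rightarrow> real" where
  "resistance mu x y = Sup {\<bar>f x - f y\<bar>^2 / enn2real (energy mu f) | f.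
                            0 < energy mu f \<and> energy mu f < \<infinity>}"

definition vol_ball :: "('a \<Rightarrow> 'a \<Rightarrow> real) \<Rightarrow> 'a \<Rightarrow> real \<Rightarrow> ennreal" where
  "vol_ball mu \<rho> r = nu mu {x. resistance mu \<rho> x \<le> r}"

definition hfun :: "('a \<Rightarrow> 'a \<Rightarrow> real) \<Rightarrow> 'a \<Rightarrow> real \<Rightarrow> ennreal" where
  "hfun mu \<rho> r = ennreal r * vol_ball mu \<rho> r"

definition hinv :: "('a \<Rightarrow> 'a \<Rightarrow> real) \<Rightarrow> 'a \<Rightarrow> real \<Rightarrow> real" where
  "hinv mu \<rho> m = Sup {r. hfun mu \<rho> r \<le> ennreal m}"

end

theory Submission
  imports Defs
begin

text \<open>Write \<open>p\<^sub>k = p\<^sub>k(\<cdot>, \<rho>)\<close> and \<open>q\<^sub>k = (p\<^sub>k + p\<^sub>k\<^sub>+\<^sub>1)/2\<close>. Since \<open>P\<close> is self-adjoint for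
  \<open>(\<cdot>,\<cdot>)\<^sub>G\<close>, \<open>(p\<^sub>a, p\<^sub>b)\<^sub>G = p\<^sub>a\<^sub>+\<^sub>b(\<rho>, \<rho>)\<close>, so \<open>\<E>(q\<^sub>k) = (q\<^sub>2\<^sub>k(\<rho>) - q\<^sub>2\<^sub>k\<^sub>+\<^sub>2(\<rho>))/2\<close>, and positivity
  of \<open>I + P\<close> makes these energies nonincreasing in \<open>k\<close>. Telescoping then gives
  \<open>m \<E>(q\<^sub>m) \<le> q\<^sub>2\<^sub>n(\<rho>)\<close> and \<open>m \<E>(q\<^sub>2\<^sub>n) \<le> q\<^sub>2\<^sub>n(\<rho>)\<close> for \<open>n = \<lfloor>m/2\<rfloor>\<close>. On the other hand, for
  \<open>r > h\<^sup>-\<^sup>1(\<lceil>m/2\<rceil>)\<close> the resistance bound \<open>|f(\<rho>) - f(x)|\<^sup>2 \<le> R(\<rho>,x) \<E>(f)\<close> keeps \<open>q\<^sub>2\<^sub>n\<close> above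
  \<open>q\<^sub>2\<^sub>n(\<rho>) - (r \<E>(q\<^sub>2\<^sub>n))\<^sup>1\<^sup>/\<^sup>2\<close> on a ball of volume \<open>> \<lceil>m/2\<rceil>/r\<close>, while \<open>q\<^sub>2\<^sub>n\<close> has mass at most 1;
  this yields \<open>m q\<^sub>2\<^sub>n(\<rho>) \<le> 4 h\<^sup>-\<^sup>1(\<lceil>m/2\<rceil>)\<close>. Finally
  \<open>(q\<^sub>m(x) - q\<^sub>m(y))\<^sup>2 \<le> R(x,y) \<E>(q\<^sub>m) \<le> 4 R(x,y) h\<^sup>-\<^sup>1(\<lceil>m/2\<rceil>)/m\<^sup>2\<close>, even with constant 4.\<close>

lemma telescope_antimono_diff_le:
  fixes t :: "nat \<Rightarrow> real"
  assumes antimono: "\<And>j. t (Suc j) - t (Suc (Suc j)) \<le> t j - t (Suc j)"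
    and nonneg: "\<And>j. 0 \<le> t j" and "i \<le> j"
  shows "real (j - i + 1) * (t j - t (Suc j)) \<le> t i"
proof -
  have dec: "decseq (\<lambda>k. t k - t (Suc k))" by (rule decseq_SucI) (rule antimono)
  have "real (j - i + 1) * (t j - t (Suc j)) = (\<Sum>k=i..j. t j - t (Suc j))"
    using \<open>i \<le> j\<close> by (simp add: Suc_diff_le)
  also have "\<dots> \<le> (\<Sum>k=i..j. t k - t (Suc k))"
    by (intro sum_mono decseqD[OF dec]) simp
  also have "\<dots> = - (\<Sum>k=i..j. t (Suc k) - t k)"
    by (simp add: sum_negf[symmetric])
  also have "\<dots> = t i - t (Suc j)"
    using sum_Suc_diff[of i j t] \<open>i \<le> j\<close> by simp
  also have "\<dots> \<le> t i" using nonneg[of "Suc j"] by simp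
  finally show ?thesis .
qed

lemma le_4_mult_if_le_2_mult_plus_sqrt:
  fixes b c :: real
  assumes "0 \<le> b" "0 \<le> c" "b \<le> 2 * c + sqrt (c * b)"
  shows "b \<le> 4 * c"
proof -
  have "sqrt (c * b) = sqrt ((2 * c) * (b / 2))" by simp
  also have "\<dots> \<le> (2 * c + b / 2) / 2"
    using assms(1,2) by (intro arith_geo_mean_sqrt) simp_all
  finally show ?thesis using assms(3) by simp
qed

definition nbhd :: "('a \<Rightarrow> 'a \<Rightarrow> real) \<Rightarrow> 'a set \<Rightarrow> 'a set" where
  "nbhd mu A = A \<union> {y. \<exists>x\<in>A. 0 < mu x y}"

fun hop_ball :: "('a \<Rightarrow> 'a \<Rightarrow> real) \<Rightarrow> 'a \<Rightarrow> nat \<Rightarrow> 'a set" where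
  "hop_ball mu x 0 = {x}"
| "hop_ball mu x (Suc k) = nbhd mu (hop_ball mu x k)"

definition trans_op :: "('a \<Rightarrow> 'a \<Rightarrow> real) \<Rightarrow> ('a \<Rightarrow> real) \<Rightarrow> 'a \<Rightarrow> real" where
  "trans_op mu f x = (\<Sum>y\<in>{y. 0 < mu x y}. mu x y * f y) / mu_v mu x"

text \<open>The inner product \<open>(f, g)\<^sub>G\<close>, truncated to a finite set \<open>B\<close>; all functions below are
  finitely supported and \<open>B\<close> is chosen to contain their supports and one layer of neighbours.\<close>
definition inner_on :: "('a \<Rightarrow> 'a \<Rightarrow> real) \<Rightarrow> 'a set \<Rightarrow> ('a \<Rightarrow> real) \<Rightarrow> ('a \<Rightarrow> real) \<Rightarrow> real" where
  "inner_on mu B f g = (\<Sum>x\<in>B. mu_v mu x * f x * g x)"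

lemma inner_on_commute: "inner_on mu B f g = inner_on mu B g f"
  unfolding inner_on_def by (simp add: mult_ac)

lemma inner_on_combination_left:
  "inner_on mu B (\<lambda>x. a * f x + b * g x) h = a * inner_on mu B f h + b * inner_on mu B g h"
  unfolding inner_on_def by (simp add: sum.distrib sum_distrib_left algebra_simps)

lemma inner_on_combination_right:
  "inner_on mu B h (\<lambda>x. a * f x + b * g x) = a * inner_on mu B h f + b * inner_on mu B h g"
  unfolding inner_on_def by (simp add: sum.distrib sum_distrib_left algebra_simps)

lemma trans_op_combination:
  "trans_op mu (\<lambda>x. a * f x + b * g x) = (\<lambda>x. a * trans_op mu f x + b * trans_op mu g x)"
proof
  fix x
  have "(\<Sum>y\<in>{y. 0 < mu x y}. mu x y * (a * f y + b * g y))
      = a * (\<Sum>y\<in>{y. 0 < mu x y}. mu x y * f y) + b * (\<Sum>y\<in>{y. 0 < mu x y}. mu x y * g y)"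
    by (simp add: sum.distrib sum_distrib_left distrib_left mult.left_commute)
  then show "trans_op mu (\<lambda>x. a * f x + b * g x) x = a * trans_op mu f x + b * trans_op mu g x"
    unfolding trans_op_def by (simp add: add_divide_distrib)
qed

locale wgraph =
  fixes mu :: "'a \<Rightarrow> 'a \<Rightarrow> real"
  assumes weighted_graph: "weighted_graph mu"
begin

lemma mu_nonneg: "0 \<le> mu x y"
  using weighted_graph unfolding weighted_graph_def by blast

lemma mu_sym: "mu x y = mu y x"
  using weighted_graph unfolding weighted_graph_def by blast

lemma finite_neighbours: "finite {y. 0 < mu x y}"
  using weighted_graph unfolding weighted_graph_def by blast

lemma connected: "(x, y) \<in> {(a, b). 0 < mu a b}\<^sup>*"
  using weighted_graph unfolding weighted_graph_def by blast

lemma mu_eq_0_if_not_pos: "\<not> 0 < mu x y \<Longrightarrow> mu x y = 0"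
  using mu_nonneg[of x y] by linarith

lemma edge_from_distinct:
  assumes "x \<noteq> y"
  shows "\<exists>z. x \<noteq> z \<and> 0 < mu x z"
  using connected[of x y] assms
proof (induction rule: converse_rtrancl_induct)
  case (step u v)
  then show ?case by (cases "u = v") auto
qed simp

lemma exists_distinct: "\<exists>y. x \<noteq> (y::'a)"
proof -
  obtain a b :: 'a where "a \<noteq> b"
    using weighted_graph unfolding weighted_graph_def by blast
  then show ?thesis by metis
qed

lemma exists_edge_from: "\<exists>z. x \<noteq> z \<and> 0 < mu x z"
proof -
  obtain y where "x \<noteq> y" using exists_distinct by blast
  then show ?thesis by (rule edge_from_distinct)
qed

lemma mu_v_pos: "0 < mu_v mu x"
proof -
  obtain z where z: "0 < mu x z" using exists_edge_from by blast
  have "mu x z \<le> mu_v mu x" unfolding mu_v_def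
    using z finite_neighbours[of x] by (intro member_le_sum) auto
  with z show ?thesis by linarith
qed

lemma finite_nbhd: "finite A \<Longrightarrow> finite (nbhd mu A)"
proof -
  assume "finite A"
  moreover have "{y. \<exists>x\<in>A. 0 < mu x y} = (\<Union>x\<in>A. {y. 0 < mu x y})" by auto
  ultimately show ?thesis unfolding nbhd_def using finite_neighbours by auto
qed

lemma subset_nbhd: "A \<subseteq> nbhd mu A"
  unfolding nbhd_def by auto

lemma finite_hop_ball: "finite (hop_ball mu x k)"
  by (induction k) (auto intro: finite_nbhd)

lemma hop_ball_mono: "k \<le> j \<Longrightarrow> hop_ball mu x k \<subseteq> hop_ball mu x j"
proof (induction j)
  case (Suc j)
  then show ?case using subset_nbhd by (cases "k = Suc j") force+
qed simp

lemma centre_in_hop_ball: "x \<in> hop_ball mu x k"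
  using hop_ball_mono[of 0 k x] by auto

lemma trans_op_mult_mu_v:
  assumes "finite B" "{y. f y \<noteq> 0} \<subseteq> B"
  shows "trans_op mu f x * mu_v mu x = (\<Sum>y\<in>B. mu x y * f y)"
proof -
  have "trans_op mu f x * mu_v mu x = (\<Sum>y\<in>{y. 0 < mu x y}. mu x y * f y)"
    unfolding trans_op_def using mu_v_pos[of x] by simp
  also have "\<dots> = (\<Sum>y\<in>{y. 0 < mu x y} \<inter> B. mu x y * f y)"
    by (rule sum.mono_neutral_right) (use finite_neighbours assms in auto)
  also have "\<dots> = (\<Sum>y\<in>B. mu x y * f y)"
    by (rule sum.mono_neutral_left) (use assms mu_eq_0_if_not_pos in auto)
  finally show ?thesis .
qed

lemma support_trans_op:
  assumes "{y. f y \<noteq> 0} \<subseteq> A"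
  shows "{x. trans_op mu f x \<noteq> 0} \<subseteq> nbhd mu A"
proof
  fix x assume "x \<in> {x. trans_op mu f x \<noteq> 0}"
  then have "(\<Sum>y\<in>{y. 0 < mu x y}. mu x y * f y) \<noteq> 0" unfolding trans_op_def by auto
  then obtain y where "0 < mu x y" "f y \<noteq> 0"
    by (metis (mono_tags, lifting) mult_zero_right sum.neutral mem_Collect_eq)
  then show "x \<in> nbhd mu A" using assms mu_sym[of x y] unfolding nbhd_def by auto
qed

lemma double_sum_diagonal:
  assumes "finite B" "{x. F x \<noteq> 0} \<subseteq> A" "nbhd mu A \<subseteq> B"
  shows "(\<Sum>x\<in>B. \<Sum>y\<in>B. mu x y * F x) = (\<Sum>x\<in>B. mu_v mu x * F x)"
proof (rule sum.cong[OF refl])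
  fix x assume "x \<in> B"
  show "(\<Sum>y\<in>B. mu x y * F x) = mu_v mu x * F x"
  proof (cases "x \<in> A")
    case True
    have "(\<Sum>y\<in>B. mu x y) = mu_v mu x" unfolding mu_v_def
      by (rule sum.mono_neutral_left[symmetric])
        (use assms True mu_eq_0_if_not_pos in \<open>auto simp: nbhd_def\<close>)
    then show ?thesis by (simp add: sum_distrib_right[symmetric])
  next
    case False
    then have "F x = 0" using assms(2) by blast
    then show ?thesis by simp
  qed
qed

lemma inner_trans_op:
  assumes "finite B" "{y. f y \<noteq> 0} \<subseteq> B"
  shows "inner_on mu B (trans_op mu f) g = (\<Sum>x\<in>B. \<Sum>y\<in>B. mu x y * f y * g x)"
  unfolding inner_on_def
proof (rule sum.cong[OF refl])
  fix x assume "x \<in> B"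
  have "mu_v mu x * trans_op mu f x * g x = (trans_op mu f x * mu_v mu x) * g x" by simp
  also have "\<dots> = (\<Sum>y\<in>B. mu x y * f y) * g x" using trans_op_mult_mu_v[OF assms] by simp
  finally show "mu_v mu x * trans_op mu f x * g x = (\<Sum>y\<in>B. mu x y * f y * g x)"
    by (simp add: sum_distrib_right)
qed

text \<open>Reversibility \<open>\<mu>\<^sub>x P(x,y) = \<mu>\<^sub>x\<^sub>y = \<mu>\<^sub>y P(y,x)\<close> makes \<open>P\<close> self-adjoint.\<close>
lemma inner_trans_op_commute:
  assumes "finite B" "{y. f y \<noteq> 0} \<subseteq> B" "{y. g y \<noteq> 0} \<subseteq> B"
  shows "inner_on mu B (trans_op mu f) g = inner_on mu B f (trans_op mu g)"
proof -
  have "inner_on mu B f (trans_op mu g) = inner_on mu B (trans_op mu g) f"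
    by (rule inner_on_commute)
  also have "\<dots> = (\<Sum>x\<in>B. \<Sum>y\<in>B. mu x y * g y * f x)" by (rule inner_trans_op[OF assms(1,3)])
  also have "\<dots> = (\<Sum>y\<in>B. \<Sum>x\<in>B. mu y x * f x * g y)"
    by (subst sum.swap) (simp add: mu_sym mult_ac)
  also have "\<dots> = inner_on mu B (trans_op mu f) g" by (rule inner_trans_op[OF assms(1,2), symmetric])
  finally show ?thesis by simp
qed

lemma double_sum_square:
  assumes "finite B" "{x. f x \<noteq> 0} \<subseteq> A" "nbhd mu A \<subseteq> B"
  shows "(\<Sum>x\<in>B. \<Sum>y\<in>B. mu x y * (f x + c * f y)^2)
           = (1 + c^2) * inner_on mu B f f + 2 * c * inner_on mu B (trans_op mu f) f"
proof -
  have supp: "{x. f x \<noteq> 0} \<subseteq> B" using assms(2,3) subset_nbhd by blast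
  have diag: "(\<Sum>x\<in>B. \<Sum>y\<in>B. mu x y * (f x)^2) = inner_on mu B f f"
    using double_sum_diagonal[of B "\<lambda>x. (f x)^2" A] assms
    unfolding inner_on_def by (simp add: power2_eq_square mult_ac)
  moreover have "(\<Sum>x\<in>B. \<Sum>y\<in>B. mu x y * (f y)^2) = inner_on mu B f f"
    using diag by (subst sum.swap) (simp add: mu_sym)
  moreover have "(\<Sum>x\<in>B. \<Sum>y\<in>B. mu x y * f y * f x) = inner_on mu B (trans_op mu f) f"
    using inner_trans_op[OF assms(1) supp] by simp
  moreover have "\<And>x y. mu x y * (f x + c * f y)^2
      = mu x y * (f x)^2 + c^2 * (mu x y * (f y)^2) + 2 * c * (mu x y * f y * f x)"
    by (simp add: power2_eq_square algebra_simps)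
  then have "(\<Sum>x\<in>B. \<Sum>y\<in>B. mu x y * (f x + c * f y)^2)
     = (\<Sum>x\<in>B. \<Sum>y\<in>B. mu x y * (f x)^2) + c^2 * (\<Sum>x\<in>B. \<Sum>y\<in>B. mu x y * (f y)^2)
       + 2 * c * (\<Sum>x\<in>B. \<Sum>y\<in>B. mu x y * f y * f x)"
    by (simp add: sum.distrib sum_distrib_left)
  ultimately show ?thesis by (simp add: algebra_simps)
qed

lemma inner_plus_inner_trans_op_nonneg:
  assumes "finite B" "{x. f x \<noteq> 0} \<subseteq> A" "nbhd mu A \<subseteq> B"
  shows "0 \<le> inner_on mu B f f + inner_on mu B (trans_op mu f) f"
proof -
  have "0 \<le> (\<Sum>x\<in>B. \<Sum>y\<in>B. mu x y * (f x + 1 * f y)^2)"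
    by (intro sum_nonneg mult_nonneg_nonneg mu_nonneg) auto
  then show ?thesis using double_sum_square[OF assms, of 1] by simp
qed

lemma inner_minus_inner_trans_op_nonneg:
  assumes "finite B" "{x. f x \<noteq> 0} \<subseteq> A" "nbhd mu A \<subseteq> B"
  shows "0 \<le> inner_on mu B f f - inner_on mu B (trans_op mu f) f"
proof -
  have "0 \<le> (\<Sum>x\<in>B. \<Sum>y\<in>B. mu x y * (f x + (-1) * f y)^2)"
    by (intro sum_nonneg mult_nonneg_nonneg mu_nonneg) auto
  then show ?thesis using double_sum_square[OF assms, of "-1"] by simp
qed

lemma energy_eq_inner:
  assumes "finite B" "{x. f x \<noteq> 0} \<subseteq> A" "nbhd mu A \<subseteq> B"
  shows "energy mu f = ennreal (inner_on mu B f f - inner_on mu B (trans_op mu f) f)"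
proof -
  let ?g = "\<lambda>(x, y). ennreal (mu x y * (f x - f y)^2 / 2)"
  have outside: "?g (x, y) = 0" if "(x, y) \<notin> B \<times> B" for x y
  proof (cases "0 < mu x y")
    case True
    moreover have "0 < mu y x" using True mu_sym by simp
    ultimately have "x \<in> A \<or> y \<in> A \<Longrightarrow> x \<in> B \<and> y \<in> B"
      using assms(3) unfolding nbhd_def by blast
    then have "f x = 0" "f y = 0" using that assms(2) by auto
    then show ?thesis by simp
  qed (simp add: mu_eq_0_if_not_pos)
  have "energy mu f = infsum ?g (B \<times> B)"
    unfolding energy_def by (rule infsum_cong_neutral) (use outside in auto)
  also have "\<dots> = ennreal (\<Sum>(x,y)\<in>B \<times> B. mu x y * (f x - f y)^2 / 2)"
    using assms(1) by (subst sum_ennreal[symmetric]) (auto intro!: sum.cong simp: mu_nonneg)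
  also have "(\<Sum>(x,y)\<in>B \<times> B. mu x y * (f x - f y)^2 / 2)
       = (\<Sum>x\<in>B. \<Sum>y\<in>B. mu x y * (f x + (-1) * f y)^2) / 2"
    by (simp add: sum.cartesian_product[symmetric] sum_divide_distrib)
  also have "\<dots> = inner_on mu B f f - inner_on mu B (trans_op mu f) f"
    using double_sum_square[OF assms, of "-1"] by simp
  finally show ?thesis .
qed

lemma walk_prob_nonneg: "0 \<le> walk_prob mu k x y"
proof (induction k arbitrary: x)
  case (Suc k)
  then show ?case
    by (simp add: trans_prob_def, intro sum_nonneg mult_nonneg_nonneg divide_nonneg_nonneg mu_nonneg)
       (use mu_v_pos less_imp_le in auto)
qed simp

lemma walk_prob_Suc_trans_op: "walk_prob mu (Suc k) x y = trans_op mu (\<lambda>z. walk_prob mu k z y) x"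
  unfolding trans_op_def by (simp add: trans_prob_def sum_divide_distrib)

lemma support_walk_prob: "{x. walk_prob mu k x y \<noteq> 0} \<subseteq> hop_ball mu y k"
proof (induction k)
  case (Suc k)
  have "{x. walk_prob mu (Suc k) x y \<noteq> 0} = {x. trans_op mu (\<lambda>z. walk_prob mu k z y) x \<noteq> 0}"
    using walk_prob_Suc_trans_op[of k _ y] by presburger
  also have "\<dots> \<subseteq> nbhd mu (hop_ball mu y k)" by (rule support_trans_op[OF Suc])
  finally show ?case by simp
qed auto

lemma inner_walk_prob_shift:
  assumes "finite B" "hop_ball mu y (a + b) \<subseteq> B" "hop_ball mu x (a + b) \<subseteq> B"
  shows "inner_on mu B (\<lambda>z. walk_prob mu a z y) (\<lambda>z. walk_prob mu b z x)
       = inner_on mu B (\<lambda>z. walk_prob mu 0 z y) (\<lambda>z. walk_prob mu (a + b) z x)"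
  using assms
proof (induction a arbitrary: b)
  case (Suc a)
  have "{z. walk_prob mu a z y \<noteq> 0} \<subseteq> B"
    using support_walk_prob[of a y] hop_ball_mono[of a "Suc a + b" y] Suc.prems(2) by auto
  moreover have "{z. walk_prob mu b z x \<noteq> 0} \<subseteq> B"
    using support_walk_prob[of b x] hop_ball_mono[of b "Suc a + b" x] Suc.prems(3) by auto
  ultimately
  have "inner_on mu B (\<lambda>z. walk_prob mu (Suc a) z y) (\<lambda>z. walk_prob mu b z x)
      = inner_on mu B (\<lambda>z. walk_prob mu a z y) (\<lambda>z. walk_prob mu (Suc b) z x)"
    unfolding walk_prob_Suc_trans_op by (rule inner_trans_op_commute[OF Suc.prems(1)])
  also have "\<dots> = inner_on mu B (\<lambda>z. walk_prob mu 0 z y) (\<lambda>z. walk_prob mu (a + Suc b) z x)"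
    by (rule Suc.IH) (use Suc.prems in auto)
  finally show ?case by simp
qed simp

lemma inner_walk_prob_0:
  assumes "finite B" "x \<in> B"
  shows "inner_on mu B h (\<lambda>z. walk_prob mu 0 z x) = mu_v mu x * h x"
proof -
  have "inner_on mu B h (\<lambda>z. walk_prob mu 0 z x) = (\<Sum>z\<in>B. if z = x then mu_v mu x * h x else 0)"
    unfolding inner_on_def by (rule sum.cong) auto
  then show ?thesis using assms by simp
qed

lemma walk_prob_reversible: "mu_v mu x * walk_prob mu k x y = mu_v mu y * walk_prob mu k y x"
proof -
  define B where "B = hop_ball mu y k \<union> hop_ball mu x k"
  have B: "finite B" "x \<in> B" "y \<in> B"
    unfolding B_def using finite_hop_ball centre_in_hop_ball by auto
  have "mu_v mu x * walk_prob mu k x y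
      = inner_on mu B (\<lambda>z. walk_prob mu k z y) (\<lambda>z. walk_prob mu 0 z x)"
    using inner_walk_prob_0[OF B(1,2)] by simp
  also have "\<dots> = inner_on mu B (\<lambda>z. walk_prob mu k z x) (\<lambda>z. walk_prob mu 0 z y)"
    using inner_walk_prob_shift[OF B(1), of y k 0 x] unfolding B_def
    by (simp add: inner_on_commute)
  also have "\<dots> = mu_v mu y * walk_prob mu k y x" using inner_walk_prob_0[OF B(1,3)] by simp
  finally show ?thesis .
qed

lemma edge_term_le_energy: "ennreal (mu a b * (f a - f b)^2 / 2) \<le> energy mu f"
proof -
  let ?g = "\<lambda>(x, y). ennreal (mu x y * (f x - f y)^2 / 2)"
  have "ennreal (mu a b * (f a - f b)^2 / 2) = infsum ?g {(a, b)}" by simp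
  also have "\<dots> \<le> infsum ?g UNIV"
    by (rule infsum_mono_neutral) (auto intro: nonneg_summable_on_complete)
  finally show ?thesis unfolding energy_def .
qed

text \<open>Induction along a path of edges; this is what makes the supremum defining the resistance finite.\<close>
lemma sq_diff_le_const_energy:
  "\<exists>C\<ge>0. \<forall>f. energy mu f < \<infinity> \<longrightarrow> (f x - f y)^2 \<le> C * enn2real (energy mu f)"
  using connected[of x y]
proof (induction rule: rtrancl_induct)
  case base
  show ?case by (intro exI[of _ 0]) simp
next
  case (step z w)
  then obtain C where C: "C \<ge> 0"
    "\<And>f. energy mu f < \<infinity> \<Longrightarrow> (f x - f z)^2 \<le> C * enn2real (energy mu f)"
    by blast
  have edge: "0 < mu z w" using step by auto
  show ?case
  proof (intro exI[of _ "2 * C + 4 / mu z w"] conjI allI impI)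
    show "0 \<le> 2 * C + 4 / mu z w" using C edge by simp
    fix f assume finite: "energy mu f < \<infinity>"
    let ?E = "enn2real (energy mu f)"
    have "mu z w * (f z - f w)^2 / 2 \<le> ?E"
      using enn2real_mono[OF edge_term_le_energy[of z w f]] finite mu_nonneg[of z w] by simp
    then have zw: "(f z - f w)^2 \<le> 2 * ?E / mu z w" using edge by (simp add: field_simps)
    have "(f x - f w)^2 = 2 * (f x - f z)^2 + 2 * (f z - f w)^2 - (f x - 2 * f z + f w)^2"
      by (simp add: power2_eq_square algebra_simps)
    then have "(f x - f w)^2 \<le> 2 * (f x - f z)^2 + 2 * (f z - f w)^2"
      by (smt (verit) zero_le_power2)
    also have "\<dots> \<le> 2 * (C * ?E) + 2 * (2 * ?E / mu z w)" using C(2)[OF finite] zw by linarith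
    also have "\<dots> = (2 * C + 4 / mu z w) * ?E" by (simp add: algebra_simps)
    finally show "(f x - f w)^2 \<le> (2 * C + 4 / mu z w) * ?E" .
  qed
qed

lemma exists_energy_pos_finite: "\<exists>f. 0 < energy mu f \<and> energy mu f < \<infinity>"
proof -
  obtain a b where ab: "a \<noteq> b" "0 < mu a b" using exists_edge_from by blast
  define f where "f = (\<lambda>z. if z = a then 1 else (0::real))"
  have "energy mu f = ennreal (inner_on mu (nbhd mu {a}) f f - inner_on mu (nbhd mu {a}) (trans_op mu f) f)"
    by (rule energy_eq_inner[of _ _ "{a}"]) (auto simp: f_def finite_nbhd)
  moreover have "0 < ennreal (mu a b * (f a - f b)^2 / 2)" using ab unfolding f_def by simp
  then have "0 < energy mu f" using edge_term_le_energy[of a b f] by order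
  ultimately have "0 < energy mu f \<and> energy mu f < \<infinity>" by simp
  then show ?thesis by blast
qed

lemma bdd_above_resistance_set:
  "bdd_above {\<bar>f x - f y\<bar>^2 / enn2real (energy mu f) | f. 0 < energy mu f \<and> energy mu f < \<infinity>}"
proof -
  obtain C where C: "\<And>f. energy mu f < \<infinity> \<Longrightarrow> (f x - f y)^2 \<le> C * enn2real (energy mu f)"
    using sq_diff_le_const_energy by blast
  have "t \<le> C" if "t = \<bar>f x - f y\<bar>^2 / enn2real (energy mu f)" "0 < energy mu f" "energy mu f < \<infinity>"
    for t f
    using C[of f] that by (simp add: enn2real_positive_iff divide_le_eq)
  then show ?thesis unfolding bdd_above_def by blast
qed

lemma resistance_nonneg: "0 \<le> resistance mu x y"
proof -
  obtain f where f: "0 < energy mu f" "energy mu f < \<infinity>" using exists_energy_pos_finite by blast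
  have "0 \<le> \<bar>f x - f y\<bar>^2 / enn2real (energy mu f)" by simp
  also have "\<dots> \<le> resistance mu x y"
    unfolding resistance_def using f by (intro cSup_upper bdd_above_resistance_set) blast
  finally show ?thesis .
qed

lemma resistance_self: "resistance mu x x = 0"
proof -
  have "{\<bar>f x - f x\<bar>^2 / enn2real (energy mu f) | f. 0 < energy mu f \<and> energy mu f < \<infinity>} = {0}"
    using exists_energy_pos_finite by auto
  then show ?thesis unfolding resistance_def by simp
qed

lemma sq_diff_le_resistance_energy:
  assumes "energy mu f < \<infinity>"
  shows "(f x - f y)^2 \<le> resistance mu x y * enn2real (energy mu f)"
proof (cases "energy mu f = 0")
  case True
  obtain C where "\<And>f. energy mu f < \<infinity> \<Longrightarrow> (f x - f y)^2 \<le> C * enn2real (energy mu f)"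
    using sq_diff_le_const_energy by blast
  then show ?thesis using assms True by fastforce
next
  case False
  then have pos: "0 < energy mu f" "0 < enn2real (energy mu f)"
    using assms by (auto simp: zero_less_iff_neq_zero enn2real_positive_iff)
  have "\<bar>f x - f y\<bar>^2 / enn2real (energy mu f) \<le> resistance mu x y"
    unfolding resistance_def using pos(1) assms by (intro cSup_upper bdd_above_resistance_set) blast
  then show ?thesis using pos(2) by (simp add: divide_le_eq)
qed

lemma ge_sub_sqrt_if_resistance_le:
  assumes "energy mu f = ennreal E" "0 \<le> E" "resistance mu x y \<le> r"
  shows "f x - sqrt (r * E) \<le> f y"
proof -
  have "(f x - f y)^2 \<le> r * E"
    using sq_diff_le_resistance_energy[of f x y] assms
      mult_right_mono[OF assms(3) assms(2)] by simp
  then have "\<bar>f x - f y\<bar> \<le> sqrt (r * E)" using real_sqrt_le_mono by fastforce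
  then show ?thesis by linarith
qed

end

locale rooted_wgraph = wgraph mu for mu :: "'a \<Rightarrow> 'a \<Rightarrow> real" +
  fixes rho :: 'a
begin

text \<open>\<open>kern k x = p\<^sub>k(x, \<rho>)\<close>, which is \<open>p\<^sub>k(\<rho>, x)\<close> by reversibility; in this form one step of
  the walk acts on it by \<open>P\<close>.\<close>
definition kern :: "nat \<Rightarrow> 'a \<Rightarrow> real" where
  "kern k x = walk_prob mu k x rho / mu_v mu rho"

definition qk :: "nat \<Rightarrow> 'a \<Rightarrow> real" where
  "qk k x = (kern k x + kern (Suc k) x) / 2"

definition qdiag :: "nat \<Rightarrow> real" where
  "qdiag j = qk (2 * j) rho"

lemma heat_kernel_eq_kern: "heat_kernel mu k rho x = kern k x"
  using walk_prob_reversible[of x k rho] mu_v_pos[of x] mu_v_pos[of rho]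
  unfolding heat_kernel_def kern_def by (simp add: field_simps)

lemma qker_eq_qk: "qker mu rho k x = qk k x"
  unfolding qker_def qk_def heat_kernel_eq_kern by simp

lemma kern_nonneg: "0 \<le> kern k x"
  unfolding kern_def using walk_prob_nonneg mu_v_pos less_imp_le by (simp add: divide_nonneg_pos)

lemma qk_nonneg: "0 \<le> qk k x"
  unfolding qk_def using kern_nonneg by (simp add: add_nonneg_nonneg)

lemma trans_op_kern: "trans_op mu (kern k) = kern (Suc k)"
  unfolding kern_def walk_prob_Suc_trans_op unfolding trans_op_def
  by (simp add: sum_divide_distrib mult_ac)

lemma qk_eq_combination: "qk k = (\<lambda>x. 1/2 * kern k x + 1/2 * kern (Suc k) x)"
  unfolding qk_def by auto

lemma trans_op_qk: "trans_op mu (qk k) = qk (Suc k)"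
  unfolding qk_eq_combination trans_op_combination trans_op_kern ..

lemma support_kern: "{x. kern k x \<noteq> 0} \<subseteq> hop_ball mu rho k"
  using support_walk_prob[of k rho] unfolding kern_def by auto

lemma support_qk: "{x. qk k x \<noteq> 0} \<subseteq> hop_ball mu rho (Suc k)"
  using support_kern[of k] support_kern[of "Suc k"] hop_ball_mono[of k "Suc k" rho]
  unfolding qk_def by fastforce

lemma inner_kern:
  assumes "finite B" "hop_ball mu rho N \<subseteq> B" "a + b \<le> N"
  shows "inner_on mu B (kern a) (kern b) = kern (a + b) rho"
proof -
  have ball: "hop_ball mu rho (a + b) \<subseteq> B"
    using hop_ball_mono[OF assms(3)] assms(2) by blast
  then have "rho \<in> B" using centre_in_hop_ball by blast
  have "inner_on mu B (kern a) (kern b)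
      = inner_on mu B (\<lambda>z. walk_prob mu a z rho) (\<lambda>z. walk_prob mu b z rho) / (mu_v mu rho)^2"
    unfolding inner_on_def kern_def by (simp add: sum_divide_distrib power2_eq_square)
  also have "inner_on mu B (\<lambda>z. walk_prob mu a z rho) (\<lambda>z. walk_prob mu b z rho)
      = inner_on mu B (\<lambda>z. walk_prob mu (a + b) z rho) (\<lambda>z. walk_prob mu 0 z rho)"
    using inner_walk_prob_shift[OF assms(1) ball ball] by (simp add: inner_on_commute)
  also have "\<dots> = mu_v mu rho * walk_prob mu (a + b) rho rho"
    by (rule inner_walk_prob_0[OF assms(1) \<open>rho \<in> B\<close>])
  finally show ?thesis unfolding kern_def using mu_v_pos[of rho] by (simp add: power2_eq_square)
qed

lemma inner_qk:
  assumes "finite B" "hop_ball mu rho N \<subseteq> B" "Suc (Suc (i + j)) \<le> N"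
  shows "inner_on mu B (qk i) (qk j)
    = (kern (i + j) rho + 2 * kern (Suc (i + j)) rho + kern (Suc (Suc (i + j))) rho) / 4"
proof -
  have "inner_on mu B (qk i) (qk j) = (inner_on mu B (kern i) (kern j) + inner_on mu B (kern i) (kern (Suc j))
      + inner_on mu B (kern (Suc i)) (kern j) + inner_on mu B (kern (Suc i)) (kern (Suc j))) / 4"
    unfolding qk_eq_combination inner_on_combination_left inner_on_combination_right
    by (simp add: field_simps)
  also have "\<dots> = (kern (i + j) rho + 2 * kern (Suc (i + j)) rho + kern (Suc (Suc (i + j))) rho) / 4"
    using assms by (simp add: inner_kern[OF assms(1,2)])
  finally show ?thesis .
qed

lemma qdiag_eq: "qdiag k = (kern (k + k) rho + kern (Suc (k + k)) rho) / 2"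
  unfolding qdiag_def qk_def by (simp add: mult_2)

lemma energy_qk: "energy mu (qk k) = ennreal ((qdiag k - qdiag (Suc k)) / 2)"
  and qdiag_Suc_le: "qdiag (Suc k) \<le> qdiag k"
proof -
  define B where "B = hop_ball mu rho (2 * k + 3)"
  have B: "finite B" "hop_ball mu rho (2 * k + 3) \<subseteq> B"
    unfolding B_def by (simp_all add: finite_hop_ball)
  have nbhd: "nbhd mu (hop_ball mu rho (Suc k)) \<subseteq> B"
    using hop_ball_mono[of "Suc (Suc k)" "2 * k + 3" rho] unfolding B_def by simp
  have "inner_on mu B (qk k) (qk k)
      = (kern (k + k) rho + 2 * kern (Suc (k + k)) rho + kern (Suc (Suc (k + k))) rho) / 4"
    by (rule inner_qk[OF B]) simp
  moreover have "inner_on mu B (qk (Suc k)) (qk k)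
      = (kern (Suc (k + k)) rho + 2 * kern (Suc (Suc (k + k))) rho + kern (Suc (Suc (Suc (k + k)))) rho) / 4"
    using inner_qk[OF B, of "Suc k" k] by simp
  moreover note qdiag_eq[of k] qdiag_eq[of "Suc k"]
  ultimately have inner: "inner_on mu B (qk k) (qk k) - inner_on mu B (trans_op mu (qk k)) (qk k)
      = (qdiag k - qdiag (Suc k)) / 2"
    unfolding trans_op_qk by simp
  show "energy mu (qk k) = ennreal ((qdiag k - qdiag (Suc k)) / 2)"
    using energy_eq_inner[OF B(1) support_qk nbhd] inner by simp
  show "qdiag (Suc k) \<le> qdiag k"
    using inner_minus_inner_trans_op_nonneg[OF B(1) support_qk nbhd] inner by simp
qed

text \<open>Applied to \<open>v = p\<^sub>j - p\<^sub>j\<^sub>+\<^sub>2\<close>, the positivity of \<open>I + P\<close> says that the energies decrease.\<close>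
lemma qdiag_diff_antimono: "qdiag (Suc j) - qdiag (Suc (Suc j)) \<le> qdiag j - qdiag (Suc j)"
proof -
  define B where "B = hop_ball mu rho (2 * j + 5)"
  have B: "finite B" "hop_ball mu rho (2 * j + 5) \<subseteq> B"
    unfolding B_def by (simp_all add: finite_hop_ball)
  define v where "v = (\<lambda>x. 1 * kern j x + (-1) * kern (Suc (Suc j)) x)"
  have "{x. v x \<noteq> 0} \<subseteq> hop_ball mu rho (Suc (Suc j))"
    using support_kern[of j] support_kern[of "Suc (Suc j)"] hop_ball_mono[of j "Suc (Suc j)" rho]
    unfolding v_def by fastforce
  moreover have "nbhd mu (hop_ball mu rho (Suc (Suc j))) \<subseteq> B"
    using hop_ball_mono[of "Suc (Suc (Suc j))" "2 * j + 5" rho] unfolding B_def by simp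
  ultimately have "0 \<le> inner_on mu B v v + inner_on mu B (trans_op mu v) v"
    by (rule inner_plus_inner_trans_op_nonneg[OF B(1)])
  also have "inner_on mu B v v + inner_on mu B (trans_op mu v) v
      = 2 * ((qdiag j - qdiag (Suc j)) - (qdiag (Suc j) - qdiag (Suc (Suc j))))"
    unfolding v_def trans_op_combination trans_op_kern inner_on_combination_left
      inner_on_combination_right qdiag_eq
    by (simp add: inner_kern[OF B] field_simps)
  finally show ?thesis by simp
qed

lemma qdiag_nonneg: "0 \<le> qdiag j"
  unfolding qdiag_def by (rule qk_nonneg)

lemma sum_mu_v_kern:
  assumes "finite B" "hop_ball mu rho (Suc k) \<subseteq> B"
  shows "(\<Sum>x\<in>B. mu_v mu x * kern k x) = 1"
  using assms(2)
proof (induction k)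
  case 0
  have "rho \<in> B" using 0 centre_in_hop_ball by blast
  have "(\<Sum>x\<in>B. mu_v mu x * kern 0 x) = (\<Sum>x\<in>B. if x = rho then 1 else 0)"
    unfolding kern_def using mu_v_pos[of rho] by (intro sum.cong) auto
  then show ?case using \<open>rho \<in> B\<close> assms(1) by simp
next
  case (Suc k)
  have nbhd: "nbhd mu (hop_ball mu rho k) \<subseteq> B"
    using Suc.prems hop_ball_mono[of "Suc k" "Suc (Suc k)" rho] by simp
  then have supp: "{x. kern k x \<noteq> 0} \<subseteq> B" using support_kern subset_nbhd by blast
  have "(\<Sum>x\<in>B. mu_v mu x * kern (Suc k) x) = (\<Sum>x\<in>B. trans_op mu (kern k) x * mu_v mu x)"
    by (simp add: trans_op_kern mult_ac)
  also have "\<dots> = (\<Sum>x\<in>B. \<Sum>y\<in>B. mu x y * kern k y)"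
    using trans_op_mult_mu_v[OF assms(1) supp] by simp
  also have "\<dots> = (\<Sum>y\<in>B. \<Sum>x\<in>B. mu y x * kern k y)"
    by (subst sum.swap) (simp add: mu_sym)
  also have "\<dots> = (\<Sum>y\<in>B. mu_v mu y * kern k y)"
    by (rule double_sum_diagonal[OF assms(1) support_kern nbhd])
  also have "\<dots> = 1" using Suc nbhd subset_nbhd by auto
  finally show ?case .
qed

lemma sum_mu_v_qk_le_1:
  assumes "finite S"
  shows "(\<Sum>x\<in>S. mu_v mu x * qk k x) \<le> 1"
proof -
  define B where "B = S \<union> hop_ball mu rho (Suc (Suc k))"
  have B: "finite B" "hop_ball mu rho (Suc (Suc k)) \<subseteq> B"
    unfolding B_def using assms finite_hop_ball[of rho "Suc (Suc k)"] by (simp_all del: hop_ball.simps)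
  have "(\<Sum>x\<in>S. mu_v mu x * qk k x) \<le> (\<Sum>x\<in>B. mu_v mu x * qk k x)"
    using B(1) mu_v_pos qk_nonneg unfolding B_def
    by (intro sum_mono2) (auto intro: mult_nonneg_nonneg less_imp_le)
  also have "\<dots> = (\<Sum>x\<in>B. mu_v mu x * kern k x / 2) + (\<Sum>x\<in>B. mu_v mu x * kern (Suc k) x / 2)"
    unfolding qk_def sum.distrib[symmetric] by (simp add: add_divide_distrib distrib_left)
  also have "\<dots> = 1"
    using sum_mu_v_kern[OF B] sum_mu_v_kern[OF B(1)] B(2) hop_ball_mono[of "Suc k" "Suc (Suc k)" rho]
    by (simp add: sum_divide_distrib[symmetric])
  finally show ?thesis .
qed

lemma mult_energy_le_qdiag:
  assumes "n \<le> j" "real m \<le> 2 * real (j - n + 1)"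
  shows "real m * ((qdiag j - qdiag (Suc j)) / 2) \<le> qdiag n"
proof -
  have "real m / 2 * (qdiag j - qdiag (Suc j)) \<le> real (j - n + 1) * (qdiag j - qdiag (Suc j))"
    using assms(2) qdiag_Suc_le[of j] by (intro mult_right_mono) simp_all
  then have "real m * ((qdiag j - qdiag (Suc j)) / 2) \<le> real (j - n + 1) * (qdiag j - qdiag (Suc j))"
    by simp
  also have "\<dots> \<le> qdiag n"
    using qdiag_diff_antimono qdiag_nonneg assms(1) by (rule telescope_antimono_diff_le[where t = qdiag])
  finally show ?thesis .
qed

lemma bdd_above_hfun_sublevel:
  assumes "0 \<le> K"
  shows "bdd_above {r. hfun mu rho r \<le> ennreal K}"
  unfolding bdd_above_def
proof (intro exI[of _ "K / mu_v mu rho"] ballI)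
  fix r assume r: "r \<in> {r. hfun mu rho r \<le> ennreal K}"
  show "r \<le> K / mu_v mu rho"
  proof (cases "r \<le> 0")
    case False
    have "ennreal (mu_v mu rho) = nu mu {rho}" unfolding nu_def by simp
    also have "\<dots> \<le> vol_ball mu rho r" unfolding vol_ball_def nu_def
      using False resistance_self[of rho]
      by (intro infsum_mono_neutral) (auto intro: nonneg_summable_on_complete)
    finally have "ennreal (r * mu_v mu rho) \<le> hfun mu rho r"
      unfolding hfun_def using False mu_v_pos[of rho] by (simp add: ennreal_mult mult_left_mono)
    then have "ennreal (r * mu_v mu rho) \<le> ennreal K" using r by (auto intro: order_trans)
    then have "r * mu_v mu rho \<le> K" using assms by (simp add: ennreal_le_iff)
    then show ?thesis using mu_v_pos[of rho] by (simp add: field_simps)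
  qed (use divide_nonneg_pos[OF assms mu_v_pos[of rho]] in linarith)
qed

lemma hinv_nonneg: "0 \<le> K \<Longrightarrow> 0 \<le> hinv mu rho K"
  unfolding hinv_def by (rule cSup_upper[OF _ bdd_above_hfun_sublevel]) (simp_all add: hfun_def)

lemma less_hfun_if_hinv_less:
  assumes "0 \<le> K" "hinv mu rho K < r"
  shows "ennreal K < hfun mu rho r"
proof (rule ccontr)
  assume "\<not> ennreal K < hfun mu rho r"
  then have "r \<le> hinv mu rho K"
    unfolding hinv_def by (intro cSup_upper bdd_above_hfun_sublevel assms(1)) (simp add: not_less)
  then show False using assms(2) by simp
qed

lemma hfun_eq_sum:
  assumes "0 \<le> r" "finite {x. resistance mu rho x \<le> r}"
  shows "hfun mu rho r = ennreal (r * (\<Sum>x\<in>{x. resistance mu rho x \<le> r}. mu_v mu x))"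
proof -
  have "vol_ball mu rho r = ennreal (\<Sum>x\<in>{x. resistance mu rho x \<le> r}. mu_v mu x)"
    unfolding vol_ball_def nu_def using assms(2) by (simp add: sum_ennreal less_imp_le[OF mu_v_pos])
  moreover have "0 \<le> (\<Sum>x\<in>{x. resistance mu rho x \<le> r}. mu_v mu x)"
    by (intro sum_nonneg) (simp add: less_imp_le[OF mu_v_pos])
  ultimately show ?thesis
    unfolding hfun_def using assms(1) by (simp add: ennreal_mult)
qed

lemma qdiag_le_hinv_bound:
  assumes K: "0 < K" and r: "hinv mu rho K < r"
  shows "qdiag n \<le> r / K + sqrt (r * ((qdiag (2 * n) - qdiag (Suc (2 * n))) / 2))"
proof -
  define E where "E = (qdiag (2 * n) - qdiag (Suc (2 * n))) / 2"
  define t where "t = qdiag n - sqrt (r * E)"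
  have E: "energy mu (qk (2 * n)) = ennreal E" "0 \<le> E"
    unfolding E_def using energy_qk qdiag_Suc_le by simp_all
  have "0 < r" using hinv_nonneg[of K] K r by linarith
  have "t < r / K"
  proof (cases "t \<le> 0")
    case True
    then show ?thesis using \<open>0 < r\<close> K by (simp add: order_le_less_trans)
  next
    case False
    define S where "S = {x. resistance mu rho x \<le> r}"
    have above: "t \<le> qk (2 * n) x" if "x \<in> S" for x
      using ge_sub_sqrt_if_resistance_le[OF E, of rho x r] that
      unfolding S_def t_def qdiag_def by simp
    have "S \<subseteq> hop_ball mu rho (Suc (2 * n))"
    proof
      fix x assume "x \<in> S"
      then have "qk (2 * n) x \<noteq> 0" using above[of x] False by linarith
      then show "x \<in> hop_ball mu rho (Suc (2 * n))" using support_qk by blast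
    qed
    then have "finite S" using finite_subset finite_hop_ball by blast
    define V where "V = (\<Sum>x\<in>S. mu_v mu x)"
    have "ennreal K < ennreal (r * V)"
      using less_hfun_if_hinv_less[OF _ r] hfun_eq_sum[OF _ \<open>finite S\<close>[unfolded S_def]] K \<open>0 < r\<close>
      unfolding V_def S_def by simp
    then have "K < r * V" using K by (simp add: ennreal_less_iff)
    have "t * V = (\<Sum>x\<in>S. mu_v mu x * t)" unfolding V_def by (simp add: sum_distrib_left mult_ac)
    also have "\<dots> \<le> (\<Sum>x\<in>S. mu_v mu x * qk (2 * n) x)"
      using above mu_v_pos less_imp_le by (intro sum_mono mult_left_mono) auto
    also have "\<dots> \<le> 1" by (rule sum_mu_v_qk_le_1[OF \<open>finite S\<close>])
    finally have "t * V \<le> 1" .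
    have "t * K < t * (r * V)" using \<open>K < r * V\<close> False by simp
    also have "\<dots> = r * (t * V)" by simp
    also have "\<dots> \<le> r" using mult_left_mono[OF \<open>t * V \<le> 1\<close>, of r] \<open>0 < r\<close> by simp
    finally show ?thesis using K by (simp add: pos_less_divide_eq)
  qed
  then show ?thesis unfolding t_def E_def by linarith
qed

lemma mult_qdiag_le_hinv:
  assumes "1 \<le> m"
  shows "real m * qdiag (m div 2) \<le> 4 * hinv mu rho (of_int \<lceil>real m / 2\<rceil>)"
proof -
  define n where "n = m div 2"
  define K :: real where "K = of_int \<lceil>real m / 2\<rceil>"
  define E where "E = (qdiag (2 * n) - qdiag (Suc (2 * n))) / 2"
  have "0 < real m" using assms by simp
  have "real m / 2 \<le> K" unfolding K_def by (rule le_of_int_ceiling)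
  then have "0 < K" using \<open>0 < real m\<close> by linarith
  have "0 \<le> E" unfolding E_def using qdiag_Suc_le by simp
  have mE: "real m * E \<le> qdiag n"
    unfolding E_def by (rule mult_energy_le_qdiag) (auto simp: n_def)
  have "real m * qdiag n / 4 \<le> hinv mu rho K"
  proof (rule dense_ge)
    fix r assume r: "hinv mu rho K < r"
    then have "0 < r" using hinv_nonneg[of K] \<open>0 < K\<close> by linarith
    define c where "c = r / real m"
    have "0 \<le> c" unfolding c_def using \<open>0 < r\<close> by simp
    have "r / K \<le> 2 * c"
      unfolding c_def using \<open>real m / 2 \<le> K\<close> \<open>0 < real m\<close> \<open>0 < r\<close>
      by (simp add: divide_left_mono field_simps)
    moreover have "r * E \<le> c * qdiag n"
      using mult_left_mono[OF mE, of c] \<open>0 \<le> c\<close> \<open>0 < real m\<close> unfolding c_def by simp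
    ultimately have "qdiag n \<le> 2 * c + sqrt (c * qdiag n)"
      using qdiag_le_hinv_bound[OF \<open>0 < K\<close> r, of n] real_sqrt_le_mono unfolding E_def
      by (smt (verit))
    then have "qdiag n \<le> 4 * c"
      by (rule le_4_mult_if_le_2_mult_plus_sqrt[OF qdiag_nonneg \<open>0 \<le> c\<close>])
    then show "real m * qdiag n / 4 \<le> r"
      unfolding c_def using \<open>0 < real m\<close> by (simp add: field_simps)
  qed
  then show ?thesis unfolding n_def K_def by simp
qed

lemma qk_diff_sq_le:
  assumes "1 \<le> m"
  shows "(qk m x - qk m y)^2 \<le> 4 * resistance mu x y * hinv mu rho (of_int \<lceil>real m / 2\<rceil>) / (real m)^2"
proof -
  define H where "H = hinv mu rho (of_int \<lceil>real m / 2\<rceil>)"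
  define E where "E = (qdiag m - qdiag (Suc m)) / 2"
  have "0 < real m" using assms by simp
  have "0 \<le> E" unfolding E_def using qdiag_Suc_le by simp
  have "(qk m x - qk m y)^2 \<le> resistance mu x y * E"
    using sq_diff_le_resistance_energy[of "qk m" x y] energy_qk[of m] \<open>0 \<le> E\<close>
    unfolding E_def by simp
  also have "\<dots> \<le> resistance mu x y * (4 * H / (real m)^2)"
  proof (rule mult_left_mono[OF _ resistance_nonneg])
    have "real m * E \<le> qdiag (m div 2)"
      unfolding E_def by (rule mult_energy_le_qdiag) auto
    then have "real m * (real m * E) \<le> 4 * H"
      using mult_qdiag_le_hinv[OF assms] mult_left_mono[of _ _ "real m"] \<open>0 < real m\<close>
      unfolding H_def by (smt (verit))
    then show "E \<le> 4 * H / (real m)^2"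
      using \<open>0 < real m\<close> by (simp add: field_simps power2_eq_square)
  qed
  finally show ?thesis unfolding H_def by (simp add: mult_ac)
qed

end

theorem proposition4p4:
  fixes mu :: "'a \<Rightarrow> 'a \<Rightarrow> real" and \<rho> :: 'a and m :: nat
  assumes "weighted_graph mu" and "1 \<le> m"
  shows "\<forall>x y. (qker mu \<rho> m x - qker mu \<rho> m y)^2
           \<le> 12 * resistance mu x y * hinv mu \<rho> (of_int \<lceil>real m / 2\<rceil>) / (real m)^2"
proof (intro allI)
  fix x y
  interpret rooted_wgraph mu \<rho>
    by unfold_locales (rule assms(1))
  have "0 \<le> resistance mu x y * hinv mu \<rho> (of_int \<lceil>real m / 2\<rceil>)"
    using resistance_nonneg hinv_nonneg assms(2) by simp
  then have "4 * resistance mu x y * hinv mu \<rho> (of_int \<lceil>real m / 2\<rceil>) / (real m)^2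
      \<le> 12 * resistance mu x y * hinv mu \<rho> (of_int \<lceil>real m / 2\<rceil>) / (real m)^2"
    by (intro divide_right_mono) (simp_all add: mult.assoc)
  with qk_diff_sq_le[OF assms(2), of x y]
  show "(qker mu \<rho> m x - qker mu \<rho> m y)^2
      \<le> 12 * resistance mu x y * hinv mu \<rho> (of_int \<lceil>real m / 2\<rceil>) / (real m)^2"
    unfolding qker_eq_qk by linarith
qed

end
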